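(* Let $\mathcal{C}$ be a deflation-exact category and $\mathcal{A}$ an admissibly deflation-percolating subcategory. Let $X\rightarrowtail Y\twoheadrightarrow Z$ be a conflation and $f\colon Y\twoheadrightarrow B$ a deflation with $B\in\mathcal{A}$. Then there is a commutative diagram $$\begin{array}{ccccc} X''&\rightarrowtail&Y''&\twoheadrightarrow&Z''\\ \downarrow&&\downarrow&&\downarrow\\ X&\rightarrowtail&Y&\twoheadrightarrow&Z\\ \downarrow&&\downarrow{\scriptstyle f}&&\downarrow\\ A&\rightarrowtail&B&\twoheadrightarrow&C\end{array}$$ in which all rows and columns are conflations, the three upper vertical maps $X''\rightarrowtail X$, $Y''\rightarrowtail Y$, $Z''\rightarrowtail Z$ are $\mathcal{A}^{-1}$-inflations, and the bottom row lies in $\mathcal{A}$. Moreover, the upper left square is a pullback and the lower right square is a pushout.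
   Context: A conflation category is an additive category with a class of kernel-cokernel pairs (closed under isomorphisms) called conflations; first map an inflation, second a deflation. A deflation-exact category is a conflation category satisfying: (R0) $1_0$ is a deflation; (R1) composites of deflations are deflations; (R2) pullbacks of deflations along arbitrary morphisms exist and are deflations. A non-empty full subcategory $\mathcal{A}$ is admissibly deflation-percolating if: (A1) for every conflation $A'\rightarrowtail A\twoheadrightarrow A''$, $A\in\mathcal{A}$ iff $A',A''\in\mathcal{A}$; (A2) every morphism $C\to A$ with $A\in\mathcal{A}$ factors as a deflation $C\twoheadrightarrow A'$ followed by an inflation $A'\rightarrowtail A$ with $A'\in\mathcal{A}$; (A3) if $a\colon C\rightarrowtail D$ is an inflation and $b\colon C\twoheadrightarrow A$ a deflation with $A\in\mathcal{A}$, the pushout of $a$ along $b$ exists and yields a deflation $D\twoheadrightarrow P$ and an inflation $A\rightarrowtail P$. An $\mathcal{A}^{-1}$-inflation is an inflation whose cokernel lies in $\mathcal{A}$. *)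

theory Defs
  imports Main
begin

text \<open>A (large) category together with a preadditive structure on its hom-sets.
 Composition convention: Comp C g f is g after f (defined when Cod f = Dom g).\<close>

record ('o, 'm) cat =
  Ob    :: "'o set"
  Ar    :: "'m set"
  Dom   :: "'m \<Rightarrow> 'o"
  Cod   :: "'m \<Rightarrow> 'o"
  Comp  :: "'m \<Rightarrow> 'm \<Rightarrow> 'm"
  Ident :: "'o \<Rightarrow> 'm"
  Plus  :: "'m \<Rightarrow> 'm \<Rightarrow> 'm"
  Zer   :: "'o \<Rightarrow> 'o \<Rightarrow> 'm"

definition hom :: "('o,'m) cat \<Rightarrow> 'o \<Rightarrow> 'o \<Rightarrow> 'm set" where
  "hom C a b = {f \<in> Ar C. Dom C f = a \<and> Cod C f = b}"

definition category :: "('o,'m) cat \<Rightarrow> bool" where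
  "category C \<longleftrightarrow>
     (\<forall>f\<in>Ar C. Dom C f \<in> Ob C \<and> Cod C f \<in> Ob C) \<and>
     (\<forall>a\<in>Ob C. Ident C a \<in> hom C a a) \<and>
     (\<forall>f\<in>Ar C. \<forall>g\<in>Ar C. Cod C f = Dom C g \<longrightarrow> Comp C g f \<in> hom C (Dom C f) (Cod C g)) \<and>
     (\<forall>f\<in>Ar C. Comp C f (Ident C (Dom C f)) = f \<and> Comp C (Ident C (Cod C f)) f = f) \<and>
     (\<forall>f\<in>Ar C. \<forall>g\<in>Ar C. \<forall>h\<in>Ar C. Cod C f = Dom C g \<longrightarrow> Cod C g = Dom C h \<longrightarrow>
        Comp C h (Comp C g f) = Comp C (Comp C h g) f)"

definition preadditive :: "('o,'m) cat \<Rightarrow> bool" where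
  "preadditive C \<longleftrightarrow> category C \<and>
     (\<forall>a\<in>Ob C. \<forall>b\<in>Ob C.
        Zer C a b \<in> hom C a b \<and>
        (\<forall>f\<in>hom C a b. \<forall>g\<in>hom C a b. Plus C f g \<in> hom C a b) \<and>
        (\<forall>f\<in>hom C a b. \<forall>g\<in>hom C a b. \<forall>h\<in>hom C a b.
            Plus C (Plus C f g) h = Plus C f (Plus C g h)) \<and>
        (\<forall>f\<in>hom C a b. \<forall>g\<in>hom C a b. Plus C f g = Plus C g f) \<and>
        (\<forall>f\<in>hom C a b. Plus C f (Zer C a b) = f) \<and>
        (\<forall>f\<in>hom C a b. \<exists>g\<in>hom C a b. Plus C f g = Zer C a b)) \<and>
     (\<forall>a\<in>Ob C. \<forall>b\<in>Ob C. \<forall>c\<in>Ob C.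
        (\<forall>f\<in>hom C a b. \<forall>g\<in>hom C b c. \<forall>g'\<in>hom C b c.
            Comp C (Plus C g g') f = Plus C (Comp C g f) (Comp C g' f)) \<and>
        (\<forall>f\<in>hom C a b. \<forall>f'\<in>hom C a b. \<forall>g\<in>hom C b c.
            Comp C g (Plus C f f') = Plus C (Comp C g f) (Comp C g f')))"

definition is_zero_obj :: "('o,'m) cat \<Rightarrow> 'o \<Rightarrow> bool" where
  "is_zero_obj C z \<longleftrightarrow> z \<in> Ob C \<and>
     (\<forall>a\<in>Ob C. (\<exists>!f. f \<in> hom C z a) \<and> (\<exists>!f. f \<in> hom C a z))"

definition has_biproducts :: "('o,'m) cat \<Rightarrow> bool" where
  "has_biproducts C \<longleftrightarrow> (\<forall>a\<in>Ob C. \<forall>b\<in>Ob C. \<exists>s\<in>Ob C. \<exists>i1 i2 p1 p2.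
     i1 \<in> hom C a s \<and> i2 \<in> hom C b s \<and> p1 \<in> hom C s a \<and> p2 \<in> hom C s b \<and>
     Comp C p1 i1 = Ident C a \<and> Comp C p2 i2 = Ident C b \<and>
     Comp C p1 i2 = Zer C b a \<and> Comp C p2 i1 = Zer C a b \<and>
     Plus C (Comp C i1 p1) (Comp C i2 p2) = Ident C s)"

definition additive :: "('o,'m) cat \<Rightarrow> bool" where
  "additive C \<longleftrightarrow> preadditive C \<and> (\<exists>z. is_zero_obj C z) \<and> has_biproducts C"

definition iso :: "('o,'m) cat \<Rightarrow> 'm \<Rightarrow> bool" where
  "iso C f \<longleftrightarrow> f \<in> Ar C \<and> (\<exists>g\<in>hom C (Cod C f) (Dom C f).
      Comp C g f = Ident C (Dom C f) \<and> Comp C f g = Ident C (Cod C f))"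

definition is_kernel :: "('o,'m) cat \<Rightarrow> 'm \<Rightarrow> 'm \<Rightarrow> bool" where
  "is_kernel C k f \<longleftrightarrow> k \<in> Ar C \<and> f \<in> Ar C \<and> Cod C k = Dom C f \<and>
     Comp C f k = Zer C (Dom C k) (Cod C f) \<and>
     (\<forall>t\<in>Ob C. \<forall>g\<in>hom C t (Dom C f). Comp C f g = Zer C t (Cod C f) \<longrightarrow>
        (\<exists>!h. h \<in> hom C t (Dom C k) \<and> Comp C k h = g))"

definition is_cokernel :: "('o,'m) cat \<Rightarrow> 'm \<Rightarrow> 'm \<Rightarrow> bool" where
  "is_cokernel C c f \<longleftrightarrow> c \<in> Ar C \<and> f \<in> Ar C \<and> Dom C c = Cod C f \<and>
     Comp C c f = Zer C (Dom C f) (Cod C c) \<and>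
     (\<forall>t\<in>Ob C. \<forall>g\<in>hom C (Cod C f) t. Comp C g f = Zer C (Dom C f) t \<longrightarrow>
        (\<exists>!h. h \<in> hom C (Cod C c) t \<and> Comp C h c = g))"

definition kc_pair :: "('o,'m) cat \<Rightarrow> 'm \<Rightarrow> 'm \<Rightarrow> bool" where
  "kc_pair C i p \<longleftrightarrow> is_kernel C i p \<and> is_cokernel C p i"

text \<open>The commutative square  a: P \<rightarrow> B, b: P \<rightarrow> D, g: B \<rightarrow> T, f: D \<rightarrow> T
  (g \<circ> a = f \<circ> b) is a pullback of g along f.\<close>
definition is_pullback :: "('o,'m) cat \<Rightarrow> 'm \<Rightarrow> 'm \<Rightarrow> 'm \<Rightarrow> 'm \<Rightarrow> bool" where
  "is_pullback C g f a b \<longleftrightarrow>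
     g \<in> Ar C \<and> f \<in> Ar C \<and> a \<in> Ar C \<and> b \<in> Ar C \<and>
     Cod C g = Cod C f \<and> Dom C a = Dom C b \<and> Cod C a = Dom C g \<and> Cod C b = Dom C f \<and>
     Comp C g a = Comp C f b \<and>
     (\<forall>t\<in>Ob C. \<forall>x\<in>hom C t (Dom C g). \<forall>y\<in>hom C t (Dom C f). Comp C g x = Comp C f y \<longrightarrow>
        (\<exists>!h. h \<in> hom C t (Dom C a) \<and> Comp C a h = x \<and> Comp C b h = y))"

text \<open>The commutative square  g: S \<rightarrow> B, f: S \<rightarrow> D, a: B \<rightarrow> P, b: D \<rightarrow> P
  (a \<circ> g = b \<circ> f) is a pushout of g along f.\<close>
definition is_pushout :: "('o,'m) cat \<Rightarrow> 'm \<Rightarrow> 'm \<Rightarrow> 'm \<Rightarrow> 'm \<Rightarrow> bool" where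
  "is_pushout C g f a b \<longleftrightarrow>
     g \<in> Ar C \<and> f \<in> Ar C \<and> a \<in> Ar C \<and> b \<in> Ar C \<and>
     Dom C g = Dom C f \<and> Cod C a = Cod C b \<and> Dom C a = Cod C g \<and> Dom C b = Cod C f \<and>
     Comp C a g = Comp C b f \<and>
     (\<forall>t\<in>Ob C. \<forall>x\<in>hom C (Cod C g) t. \<forall>y\<in>hom C (Cod C f) t. Comp C x g = Comp C y f \<longrightarrow>
        (\<exists>!h. h \<in> hom C (Cod C a) t \<and> Comp C h a = x \<and> Comp C h b = y))"

text \<open>E is the class of conflations, given as pairs (inflation, deflation).\<close>

definition conflation_category :: "('o,'m) cat \<Rightarrow> ('m \<times> 'm) set \<Rightarrow> bool" where
  "conflation_category C E \<longleftrightarrow> additive C \<and>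
     (\<forall>(i,p)\<in>E. kc_pair C i p) \<and>
     (\<forall>i p i' p' a b c. (i,p) \<in> E \<and> i' \<in> Ar C \<and> p' \<in> Ar C \<and> Cod C i' = Dom C p' \<and>
        iso C a \<and> iso C b \<and> iso C c \<and>
        Dom C a = Dom C i \<and> Cod C a = Dom C i' \<and>
        Dom C b = Cod C i \<and> Cod C b = Cod C i' \<and>
        Dom C c = Cod C p \<and> Cod C c = Cod C p' \<and>
        Comp C b i = Comp C i' a \<and> Comp C c p = Comp C p' b \<longrightarrow> (i',p') \<in> E)"

definition inflation :: "('m \<times> 'm) set \<Rightarrow> 'm \<Rightarrow> bool" where
  "inflation E i \<longleftrightarrow> (\<exists>p. (i,p) \<in> E)"

definition deflation :: "('m \<times> 'm) set \<Rightarrow> 'm \<Rightarrow> bool" where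
  "deflation E p \<longleftrightarrow> (\<exists>i. (i,p) \<in> E)"

definition deflation_exact :: "('o,'m) cat \<Rightarrow> ('m \<times> 'm) set \<Rightarrow> bool" where
  "deflation_exact C E \<longleftrightarrow> conflation_category C E \<and>
     \<comment> \<open>R0\<close>
     (\<forall>z. is_zero_obj C z \<longrightarrow> deflation E (Ident C z)) \<and>
     \<comment> \<open>R1\<close>
     (\<forall>p q. deflation E p \<and> deflation E q \<and> Cod C p = Dom C q \<longrightarrow> deflation E (Comp C q p)) \<and>
     \<comment> \<open>R2\<close>
     (\<forall>p f. deflation E p \<and> f \<in> Ar C \<and> Cod C f = Cod C p \<longrightarrow>
        (\<exists>a b. is_pullback C p f a b \<and> deflation E b))"

definition adm_defl_percolating :: "('o,'m) cat \<Rightarrow> ('m \<times> 'm) set \<Rightarrow> 'o set \<Rightarrow> bool" where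
  "adm_defl_percolating C E \<A> \<longleftrightarrow> \<A> \<noteq> {} \<and> \<A> \<subseteq> Ob C \<and>
     \<comment> \<open>A1\<close>
     (\<forall>(i,p)\<in>E. Cod C i \<in> \<A> \<longleftrightarrow> (Dom C i \<in> \<A> \<and> Cod C p \<in> \<A>)) \<and>
     \<comment> \<open>A2\<close>
     (\<forall>f\<in>Ar C. Cod C f \<in> \<A> \<longrightarrow>
        (\<exists>d m. deflation E d \<and> inflation E m \<and> Dom C d = Dom C f \<and> Cod C d = Dom C m \<and>
               Cod C m = Cod C f \<and> Dom C m \<in> \<A> \<and> f = Comp C m d)) \<and>
     \<comment> \<open>A3\<close>
     (\<forall>a b. inflation E a \<and> deflation E b \<and> Dom C a = Dom C b \<and> Cod C b \<in> \<A> \<longrightarrow>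
        (\<exists>a' b'. is_pushout C a b a' b' \<and> deflation E a' \<and> inflation E b'))"

text \<open>In the pushout square of A3 (with the naming of is_pushout): a' : D \<rightarrow> P is the
  pushout of b (a deflation), b' : A \<rightarrow> P the pushout of a (an inflation).\<close>

definition A_inv_inflation :: "('o,'m) cat \<Rightarrow> ('m \<times> 'm) set \<Rightarrow> 'o set \<Rightarrow> 'm \<Rightarrow> bool" where
  "A_inv_inflation C E \<A> i \<longleftrightarrow> (\<exists>p. (i,p) \<in> E \<and> Cod C p \<in> \<A>)"

end

theory Submission
  imports Defs
begin

(* The bottom row comes from axiom A2: factor f i as X ->> A >-> B and let B ->> C be the
   cokernel of A >-> B.  The induced map Z -> C is a deflation because its composite with p is
   the deflation c f and C lies in A.  The upper vertical maps are the kernels of the lower ones,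
   and the two outer squares are a pullback and a pushout by a diagram chase.

   The substance is that the induced top row is a conflation.  Pulling X >-> Y ->> Z back along
   Z'' >-> Z gives a conflation X >-> P ->> Z''; then Y'' is the kernel of the map g : P -> A
   induced by f, and g restricts to the deflation X ->> A on X.  Pushing X >-> P out along
   X ->> A (axiom A3) gives a deflation P ->> Q with Q a biproduct of A and Z'', and Y'' ->> Z''
   is the pullback of this deflation along the injection Z'' -> Q, hence a deflation; its
   kernel is X''. *)

locale preadditive_cat =
  fixes C :: "('o, 'm) cat"
  assumes preadditive: "preadditive C"
begin

abbreviation cat_comp (infixr "\<cdot>" 70) where "g \<cdot> f \<equiv> Comp C g f"
abbreviation Hom where "Hom a b \<equiv> hom C a b"
abbreviation cat_plus (infixl "\<oplus>" 65) where "f \<oplus> g \<equiv> Plus C f g"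

lemma category: "category C"
  using preadditive unfolding preadditive_def by blast

lemma homD:
  assumes "f \<in> Hom a b"
  shows "f \<in> Ar C" "Dom C f = a" "Cod C f = b" "a \<in> Ob C" "b \<in> Ob C"
  using assms category unfolding hom_def category_def by auto

lemma comp_hom: "f \<in> Hom a b \<Longrightarrow> g \<in> Hom b c \<Longrightarrow> g \<cdot> f \<in> Hom a c"
  using category homD unfolding category_def by metis

lemma comp_assoc:
  "f \<in> Hom a b \<Longrightarrow> g \<in> Hom b c \<Longrightarrow> h \<in> Hom c d \<Longrightarrow> h \<cdot> (g \<cdot> f) = (h \<cdot> g) \<cdot> f"
  using category homD unfolding category_def by metis

lemma ident_hom: "a \<in> Ob C \<Longrightarrow> Ident C a \<in> Hom a a"
  using category unfolding category_def by blast

lemma ident_left: "f \<in> Hom a b \<Longrightarrow> Ident C b \<cdot> f = f"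
  using category homD unfolding category_def by metis

lemma ident_right: "f \<in> Hom a b \<Longrightarrow> f \<cdot> Ident C a = f"
  using category homD unfolding category_def by metis

lemma zero_hom: "a \<in> Ob C \<Longrightarrow> b \<in> Ob C \<Longrightarrow> Zer C a b \<in> Hom a b"
  using preadditive unfolding preadditive_def by blast

lemma plus_hom: "f \<in> Hom a b \<Longrightarrow> g \<in> Hom a b \<Longrightarrow> f \<oplus> g \<in> Hom a b"
  using preadditive homD unfolding preadditive_def by metis

lemma plus_assoc:
  "f \<in> Hom a b \<Longrightarrow> g \<in> Hom a b \<Longrightarrow> h \<in> Hom a b \<Longrightarrow> (f \<oplus> g) \<oplus> h = f \<oplus> (g \<oplus> h)"
  using preadditive homD unfolding preadditive_def by metis

lemma plus_commute: "f \<in> Hom a b \<Longrightarrow> g \<in> Hom a b \<Longrightarrow> f \<oplus> g = g \<oplus> f"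
  using preadditive homD unfolding preadditive_def by metis

lemma plus_zero_right: "f \<in> Hom a b \<Longrightarrow> f \<oplus> Zer C a b = f"
  using preadditive homD unfolding preadditive_def by metis

lemma plus_zero_left: "f \<in> Hom a b \<Longrightarrow> Zer C a b \<oplus> f = f"
  using plus_commute plus_zero_right zero_hom homD by metis

lemma additive_inverse: "f \<in> Hom a b \<Longrightarrow> \<exists>g\<in>Hom a b. f \<oplus> g = Zer C a b"
  using preadditive homD unfolding preadditive_def by metis

lemma comp_plus_left:
  "f \<in> Hom a b \<Longrightarrow> g \<in> Hom b c \<Longrightarrow> g' \<in> Hom b c \<Longrightarrow> (g \<oplus> g') \<cdot> f = g \<cdot> f \<oplus> g' \<cdot> f"
  using preadditive homD unfolding preadditive_def by metis

lemma comp_plus_right: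
  "f \<in> Hom a b \<Longrightarrow> f' \<in> Hom a b \<Longrightarrow> g \<in> Hom b c \<Longrightarrow> g \<cdot> (f \<oplus> f') = g \<cdot> f \<oplus> g \<cdot> f'"
  using preadditive homD unfolding preadditive_def by metis

lemma zero_idempotent:
  assumes x: "x \<in> Hom a b" and idem: "x = x \<oplus> x"
  shows "x = Zer C a b"
proof -
  obtain y where y: "y \<in> Hom a b" "x \<oplus> y = Zer C a b"
    using additive_inverse[OF x] by blast
  have "Zer C a b = (x \<oplus> x) \<oplus> y" using y idem by simp
  also have "\<dots> = x" using plus_assoc[OF x x y(1)] y plus_zero_right[OF x] by simp
  finally show ?thesis by simp
qed

lemma zero_comp:
  assumes f: "f \<in> Hom a b" and c: "c \<in> Ob C"
  shows "Zer C b c \<cdot> f = Zer C a c"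
proof -
  have z: "Zer C b c \<in> Hom b c" using zero_hom[OF homD(5)[OF f] c] .
  have "Zer C b c \<cdot> f = (Zer C b c \<oplus> Zer C b c) \<cdot> f" using plus_zero_right[OF z] by simp
  also have "\<dots> = Zer C b c \<cdot> f \<oplus> Zer C b c \<cdot> f" using comp_plus_left[OF f z z] .
  finally show ?thesis using zero_idempotent[OF comp_hom[OF f z]] by simp
qed

lemma comp_zero:
  assumes g: "g \<in> Hom b c" and a: "a \<in> Ob C"
  shows "g \<cdot> Zer C a b = Zer C a c"
proof -
  have z: "Zer C a b \<in> Hom a b" using zero_hom[OF a homD(4)[OF g]] .
  have "g \<cdot> Zer C a b = g \<cdot> (Zer C a b \<oplus> Zer C a b)" using plus_zero_right[OF z] by simp
  also have "\<dots> = g \<cdot> Zer C a b \<oplus> g \<cdot> Zer C a b" using comp_plus_right[OF z z g] .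
  finally show ?thesis using zero_idempotent[OF comp_hom[OF z g]] by simp
qed

definition monic :: "'m \<Rightarrow> bool" where
  "monic k \<longleftrightarrow> (\<forall>t h h'. h \<in> Hom t (Dom C k) \<longrightarrow> h' \<in> Hom t (Dom C k) \<longrightarrow> k \<cdot> h = k \<cdot> h' \<longrightarrow> h = h')"

definition epic :: "'m \<Rightarrow> bool" where
  "epic c \<longleftrightarrow> (\<forall>t h h'. h \<in> Hom (Cod C c) t \<longrightarrow> h' \<in> Hom (Cod C c) t \<longrightarrow> h \<cdot> c = h' \<cdot> c \<longrightarrow> h = h')"

lemma monicD:
  assumes "monic k" "k \<in> Hom a b" "h \<in> Hom t a" "h' \<in> Hom t a" "k \<cdot> h = k \<cdot> h'"
  shows "h = h'"
  using assms homD(2)[OF assms(2)] unfolding monic_def by blast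

lemma epicD:
  assumes "epic c" "c \<in> Hom a b" "h \<in> Hom b t" "h' \<in> Hom b t" "h \<cdot> c = h' \<cdot> c"
  shows "h = h'"
  using assms homD(3)[OF assms(2)] unfolding epic_def by blast

lemma monic_cancel:
  assumes "f \<in> Hom a b" "g \<in> Hom b c" "monic (g \<cdot> f)"
  shows "monic f"
  unfolding monic_def
proof (intro allI impI)
  fix t h h' assume "h \<in> Hom t (Dom C f)" "h' \<in> Hom t (Dom C f)" "f \<cdot> h = f \<cdot> h'"
  moreover have "Dom C f = a" using homD(2)[OF assms(1)] .
  ultimately have h: "h \<in> Hom t a" "h' \<in> Hom t a" and "(g \<cdot> f) \<cdot> h = (g \<cdot> f) \<cdot> h'"
    using comp_assoc[OF _ assms(1,2)] by metis+
  then show "h = h'"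
    using monicD[OF assms(3) comp_hom[OF assms(1,2)]] by blast
qed

lemma monic_comp:
  assumes f: "f \<in> Hom a b" and g: "g \<in> Hom b c" and "monic f" "monic g"
  shows "monic (g \<cdot> f)"
  unfolding monic_def
proof (intro allI impI)
  fix t h h' assume "h \<in> Hom t (Dom C (g \<cdot> f))" "h' \<in> Hom t (Dom C (g \<cdot> f))" "(g \<cdot> f) \<cdot> h = (g \<cdot> f) \<cdot> h'"
  then have h: "h \<in> Hom t a" "h' \<in> Hom t a" and "g \<cdot> (f \<cdot> h) = g \<cdot> (f \<cdot> h')"
    using homD(2)[OF comp_hom[OF f g]] comp_assoc[OF _ f g] by metis+
  then have "f \<cdot> h = f \<cdot> h'" using monicD[OF \<open>monic g\<close> g] comp_hom[OF _ f] by blast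
  then show "h = h'" using monicD[OF \<open>monic f\<close> f h] by blast
qed

lemma isoI:
  assumes "f \<in> Hom a b" "g \<in> Hom b a" "g \<cdot> f = Ident C a" "f \<cdot> g = Ident C b"
  shows "iso C f"
  unfolding iso_def using assms homD[OF assms(1)] by auto

lemma isoE:
  assumes "iso C f" "f \<in> Hom a b"
  obtains g where "g \<in> Hom b a" "g \<cdot> f = Ident C a" "f \<cdot> g = Ident C b"
  using assms homD(2,3)[OF assms(2)] unfolding iso_def by blast

lemma Dom_Cod_Ident: "a \<in> Ob C \<Longrightarrow> Dom C (Ident C a) = a \<and> Cod C (Ident C a) = a"
  using homD(2,3)[OF ident_hom] by blast

lemma ident_iso: "a \<in> Ob C \<Longrightarrow> iso C (Ident C a)"
  using isoI[OF ident_hom ident_hom] ident_left[OF ident_hom] by blast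

lemma kernel_universal:
  assumes "is_kernel C k f" "t \<in> Ob C" "g \<in> Hom t (Dom C f)" "f \<cdot> g = Zer C t (Cod C f)"
  shows "\<exists>!h. h \<in> Hom t (Dom C k) \<and> k \<cdot> h = g"
proof -
  have "\<forall>t\<in>Ob C. \<forall>g\<in>Hom t (Dom C f). f \<cdot> g = Zer C t (Cod C f) \<longrightarrow>
      (\<exists>!h. h \<in> Hom t (Dom C k) \<and> k \<cdot> h = g)"
    using assms(1) unfolding is_kernel_def by (elim conjE)
  then show ?thesis using assms(2-4) by blast
qed

lemma kernel_zero:
  assumes "is_kernel C k f" "k \<in> Hom K Y" "f \<in> Hom Y Z"
  shows "f \<cdot> k = Zer C K Z"
  using assms(1) unfolding is_kernel_def homD(2)[OF assms(2)] homD(3)[OF assms(3)] by (elim conjE)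

lemma kernel_factor:
  assumes "is_kernel C k f" "k \<in> Hom K Y" "f \<in> Hom Y Z" "g \<in> Hom T Y" "f \<cdot> g = Zer C T Z"
  shows "\<exists>h\<in>Hom T K. k \<cdot> h = g"
  using kernel_universal[OF assms(1) homD(4)[OF assms(4)]] assms(4,5)
  unfolding homD(2)[OF assms(2)] homD(2,3)[OF assms(3)] by blast

lemma kernel_monic:
  assumes ker: "is_kernel C k f"
  shows "monic k"
  unfolding monic_def
proof (intro allI impI)
  fix t h h' assume h: "h \<in> Hom t (Dom C k)" "h' \<in> Hom t (Dom C k)" and eq: "k \<cdot> h = k \<cdot> h'"
  have "k \<in> Ar C" "f \<in> Ar C" "Cod C k = Dom C f"
    using ker unfolding is_kernel_def by blast+
  then have k: "k \<in> Hom (Dom C k) (Dom C f)" and f: "f \<in> Hom (Dom C f) (Cod C f)"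
    unfolding hom_def by auto
  have "f \<cdot> (k \<cdot> h) = (f \<cdot> k) \<cdot> h" using comp_assoc[OF h(1) k f] .
  also have "\<dots> = Zer C t (Cod C f)"
    using kernel_zero[OF ker k f] zero_comp[OF h(1) homD(5)[OF f]] by simp
  finally have "f \<cdot> (k \<cdot> h) = Zer C t (Cod C f)" .
  from kernel_universal[OF ker homD(4)[OF h(1)] comp_hom[OF h(1) k] this]
  show "h = h'" using h eq by (elim ex1E) metis
qed

lemma is_kernelI:
  assumes k: "k \<in> Hom K Y" and f: "f \<in> Hom Y Z" and zero: "f \<cdot> k = Zer C K Z"
    and factor: "\<And>T g. g \<in> Hom T Y \<Longrightarrow> f \<cdot> g = Zer C T Z \<Longrightarrow> \<exists>h\<in>Hom T K. k \<cdot> h = g"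
    and "monic k"
  shows "is_kernel C k f"
proof -
  have "\<exists>!h. h \<in> Hom T K \<and> k \<cdot> h = g" if "g \<in> Hom T Y" "f \<cdot> g = Zer C T Z" for T g
    using factor[OF that] monicD[OF \<open>monic k\<close> k] by blast
  then show ?thesis
    unfolding is_kernel_def homD(2,3)[OF k] homD(2,3)[OF f] using homD(1)[OF k] homD(1)[OF f] zero
    by simp
qed

lemma cokernel_universal:
  assumes "is_cokernel C c f" "t \<in> Ob C" "g \<in> Hom (Cod C f) t" "g \<cdot> f = Zer C (Dom C f) t"
  shows "\<exists>!h. h \<in> Hom (Cod C c) t \<and> h \<cdot> c = g"
proof -
  have "\<forall>t\<in>Ob C. \<forall>g\<in>Hom (Cod C f) t. g \<cdot> f = Zer C (Dom C f) t \<longrightarrow>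
      (\<exists>!h. h \<in> Hom (Cod C c) t \<and> h \<cdot> c = g)"
    using assms(1) unfolding is_cokernel_def by (elim conjE)
  then show ?thesis using assms(2-4) by blast
qed

lemma cokernel_zero:
  assumes "is_cokernel C c f" "f \<in> Hom X Y" "c \<in> Hom Y Z"
  shows "c \<cdot> f = Zer C X Z"
  using assms(1) unfolding is_cokernel_def homD(2)[OF assms(2)] homD(3)[OF assms(3)] by (elim conjE)

lemma cokernel_factor:
  assumes "is_cokernel C c f" "f \<in> Hom X Y" "c \<in> Hom Y Z" "g \<in> Hom Y T" "g \<cdot> f = Zer C X T"
  shows "\<exists>h\<in>Hom Z T. h \<cdot> c = g"
  using cokernel_universal[OF assms(1) homD(5)[OF assms(4)]] assms(4,5)
  unfolding homD(2,3)[OF assms(2)] homD(3)[OF assms(3)] by blast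

lemma cokernel_epic:
  assumes coker: "is_cokernel C c f"
  shows "epic c"
  unfolding epic_def
proof (intro allI impI)
  fix t h h' assume h: "h \<in> Hom (Cod C c) t" "h' \<in> Hom (Cod C c) t" and eq: "h \<cdot> c = h' \<cdot> c"
  have "c \<in> Ar C" "f \<in> Ar C" "Dom C c = Cod C f"
    using coker unfolding is_cokernel_def by blast+
  then have c: "c \<in> Hom (Cod C f) (Cod C c)" and f: "f \<in> Hom (Dom C f) (Cod C f)"
    unfolding hom_def by auto
  have "(h \<cdot> c) \<cdot> f = h \<cdot> (c \<cdot> f)" using comp_assoc[OF f c h(1)] by simp
  also have "\<dots> = Zer C (Dom C f) t"
    using cokernel_zero[OF coker f c] comp_zero[OF h(1) homD(4)[OF f]] by simp
  finally have "(h \<cdot> c) \<cdot> f = Zer C (Dom C f) t" .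
  from cokernel_universal[OF coker homD(5)[OF h(1)] comp_hom[OF c h(1)] this]
  show "h = h'" using h eq by (elim ex1E) metis
qed

lemma pullback_homs:
  assumes "is_pullback C g f a b" "g \<in> Hom X Z" "f \<in> Hom Y Z"
  shows "a \<in> Hom (Dom C a) X" "b \<in> Hom (Dom C a) Y" "g \<cdot> a = f \<cdot> b"
proof -
  have "a \<in> Ar C" "b \<in> Ar C" "Dom C a = Dom C b" "Cod C a = Dom C g" "Cod C b = Dom C f" "g \<cdot> a = f \<cdot> b"
    using assms(1) unfolding is_pullback_def by blast+
  then show "a \<in> Hom (Dom C a) X" "b \<in> Hom (Dom C a) Y" "g \<cdot> a = f \<cdot> b"
    using homD(2)[OF assms(2)] homD(2)[OF assms(3)] unfolding hom_def by auto
qed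

lemma pullback_universal:
  assumes "is_pullback C g f a b" "t \<in> Ob C" "x \<in> Hom t (Dom C g)" "y \<in> Hom t (Dom C f)" "g \<cdot> x = f \<cdot> y"
  shows "\<exists>!h. h \<in> Hom t (Dom C a) \<and> a \<cdot> h = x \<and> b \<cdot> h = y"
proof -
  have "\<forall>t\<in>Ob C. \<forall>x\<in>Hom t (Dom C g). \<forall>y\<in>Hom t (Dom C f). g \<cdot> x = f \<cdot> y \<longrightarrow>
      (\<exists>!h. h \<in> Hom t (Dom C a) \<and> a \<cdot> h = x \<and> b \<cdot> h = y)"
    using assms(1) unfolding is_pullback_def by (elim conjE)
  then show ?thesis using assms(2-5) by blast
qed

lemma pullback_factor:
  assumes "is_pullback C g f a b" "g \<in> Hom X Z" "f \<in> Hom Y Z" "a \<in> Hom P X"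
    "x \<in> Hom T X" "y \<in> Hom T Y" "g \<cdot> x = f \<cdot> y"
  shows "\<exists>h\<in>Hom T P. a \<cdot> h = x \<and> b \<cdot> h = y"
  using pullback_universal[OF assms(1) homD(4)[OF assms(5)]] assms(5-7)
  unfolding homD(2)[OF assms(2)] homD(2)[OF assms(3)] homD(2)[OF assms(4)] by blast

lemma pullback_unique:
  assumes pb: "is_pullback C g f a b" and g: "g \<in> Hom X Z" and f: "f \<in> Hom Y Z" and a: "a \<in> Hom P X"
    and h: "h \<in> Hom T P" "h' \<in> Hom T P" and eq: "a \<cdot> h = a \<cdot> h'" "b \<cdot> h = b \<cdot> h'"
  shows "h = h'"
proof -
  note ab = pullback_homs[OF pb g f, unfolded homD(2)[OF a]]
  have "g \<cdot> (a \<cdot> h) = f \<cdot> (b \<cdot> h)"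
    using comp_assoc[OF h(1) ab(1) g] comp_assoc[OF h(1) ab(2) f] ab(3) by simp
  moreover have "a \<cdot> h \<in> Hom T (Dom C g)" "b \<cdot> h \<in> Hom T (Dom C f)"
    using comp_hom[OF h(1) ab(1)] comp_hom[OF h(1) ab(2)] homD(2)[OF g] homD(2)[OF f] by simp_all
  ultimately have "\<exists>!u. u \<in> Hom T P \<and> a \<cdot> u = a \<cdot> h \<and> b \<cdot> u = b \<cdot> h"
    using pullback_universal[OF pb homD(4)[OF h(1)]] homD(2)[OF a] by simp
  then show ?thesis using h eq by (elim ex1E) metis
qed

lemma is_pullbackI:
  assumes g: "g \<in> Hom X Z" and f: "f \<in> Hom Y Z" and a: "a \<in> Hom P X" and b: "b \<in> Hom P Y"
    and square: "g \<cdot> a = f \<cdot> b"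
    and factor: "\<And>T x y. x \<in> Hom T X \<Longrightarrow> y \<in> Hom T Y \<Longrightarrow> g \<cdot> x = f \<cdot> y \<Longrightarrow>
      \<exists>h\<in>Hom T P. a \<cdot> h = x \<and> b \<cdot> h = y"
    and "monic a"
  shows "is_pullback C g f a b"
proof -
  have "\<exists>!h. h \<in> Hom T P \<and> a \<cdot> h = x \<and> b \<cdot> h = y"
    if "x \<in> Hom T X" "y \<in> Hom T Y" "g \<cdot> x = f \<cdot> y" for T x y
    using factor[OF that] monicD[OF \<open>monic a\<close> a] by blast
  then show ?thesis
    unfolding is_pullback_def homD(2,3)[OF g] homD(2,3)[OF f] homD(2,3)[OF a] homD(2,3)[OF b]
    using homD(1)[OF g] homD(1)[OF f] homD(1)[OF a] homD(1)[OF b] square by simp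
qed

lemma pushout_homs:
  assumes "is_pushout C g f a b" "g \<in> Hom S X" "f \<in> Hom S Y"
  shows "a \<in> Hom X (Cod C a)" "b \<in> Hom Y (Cod C a)" "a \<cdot> g = b \<cdot> f"
proof -
  have "a \<in> Ar C" "b \<in> Ar C" "Cod C a = Cod C b" "Dom C a = Cod C g" "Dom C b = Cod C f" "a \<cdot> g = b \<cdot> f"
    using assms(1) unfolding is_pushout_def by blast+
  then show "a \<in> Hom X (Cod C a)" "b \<in> Hom Y (Cod C a)" "a \<cdot> g = b \<cdot> f"
    using homD(3)[OF assms(2)] homD(3)[OF assms(3)] unfolding hom_def by auto
qed

lemma pushout_factor:
  assumes "is_pushout C g f a b" "g \<in> Hom S X" "f \<in> Hom S Y" "a \<in> Hom X Q"
    "x \<in> Hom X T" "y \<in> Hom Y T" "x \<cdot> g = y \<cdot> f"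
  shows "\<exists>h\<in>Hom Q T. h \<cdot> a = x \<and> h \<cdot> b = y"
proof -
  have "\<forall>t\<in>Ob C. \<forall>x\<in>Hom (Cod C g) t. \<forall>y\<in>Hom (Cod C f) t. x \<cdot> g = y \<cdot> f \<longrightarrow>
      (\<exists>!h. h \<in> Hom (Cod C a) t \<and> h \<cdot> a = x \<and> h \<cdot> b = y)"
    using assms(1) unfolding is_pushout_def by (elim conjE)
  then show ?thesis using assms(5-7) homD(5)[OF assms(5)]
    unfolding homD(3)[OF assms(2)] homD(3)[OF assms(3)] homD(3)[OF assms(4)] by blast
qed

lemma is_pushoutI:
  assumes g: "g \<in> Hom S X" and f: "f \<in> Hom S Y" and a: "a \<in> Hom X Q" and b: "b \<in> Hom Y Q"
    and square: "a \<cdot> g = b \<cdot> f"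
    and factor: "\<And>T x y. x \<in> Hom X T \<Longrightarrow> y \<in> Hom Y T \<Longrightarrow> x \<cdot> g = y \<cdot> f \<Longrightarrow>
      \<exists>h\<in>Hom Q T. h \<cdot> a = x \<and> h \<cdot> b = y"
    and "epic b"
  shows "is_pushout C g f a b"
proof -
  have "\<exists>!h. h \<in> Hom Q T \<and> h \<cdot> a = x \<and> h \<cdot> b = y"
    if "x \<in> Hom X T" "y \<in> Hom Y T" "x \<cdot> g = y \<cdot> f" for T x y
    using factor[OF that] epicD[OF \<open>epic b\<close> b] by blast
  then show ?thesis
    unfolding is_pushout_def homD(2,3)[OF g] homD(2,3)[OF f] homD(2,3)[OF a] homD(2,3)[OF b]
    using homD(1)[OF g] homD(1)[OF f] homD(1)[OF a] homD(1)[OF b] square by simp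
qed

lemma pullback_of_monic:
  assumes pb: "is_pullback C g f a b" and g: "g \<in> Hom X Z" and f: "f \<in> Hom Y Z" "monic f"
  shows "monic a"
  unfolding monic_def
proof (intro allI impI)
  fix T h h' assume h: "h \<in> Hom T (Dom C a)" "h' \<in> Hom T (Dom C a)" and eq: "a \<cdot> h = a \<cdot> h'"
  note ab = pullback_homs[OF pb g f(1)]
  have "f \<cdot> (b \<cdot> h) = f \<cdot> (b \<cdot> h')"
    using comp_assoc[OF h(1) ab(2) f(1)] comp_assoc[OF h(2) ab(2) f(1)] ab(3) eq
      comp_assoc[OF h(1) ab(1) g] comp_assoc[OF h(2) ab(1) g] by metis
  then have "b \<cdot> h = b \<cdot> h'"
    by (rule monicD[OF f(2) f(1) comp_hom[OF h(1) ab(2)] comp_hom[OF h(2) ab(2)]])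
  then show "h = h'" using pullback_unique[OF pb g f(1) ab(1) h eq] by blast
qed

lemma kernel_of_pullback:
  assumes pb: "is_pullback C p u w q" and p: "p \<in> Hom Y Z" and u: "u \<in> Hom Z' Z"
    and ker: "is_kernel C i p" and i: "i \<in> Hom X Y"
  shows "\<exists>k\<in>Hom X (Dom C w). w \<cdot> k = i \<and> is_kernel C k q"
proof -
  note wq = pullback_homs[OF pb p u]
  have X: "X \<in> Ob C" and Z': "Z' \<in> Ob C" using homD[OF i] homD[OF u] by simp_all
  have "p \<cdot> i = u \<cdot> Zer C X Z'"
    using kernel_zero[OF ker i p] comp_zero[OF u X] by simp
  then obtain k where k: "k \<in> Hom X (Dom C w)" "w \<cdot> k = i" "q \<cdot> k = Zer C X Z'"
    using pullback_factor[OF pb p u wq(1) i zero_hom[OF X Z']] by blast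
  have "is_kernel C k q"
  proof (rule is_kernelI[OF k(1) wq(2) k(3)])
    fix T y assume y: "y \<in> Hom T (Dom C w)" and qy: "q \<cdot> y = Zer C T Z'"
    have T: "T \<in> Ob C" using homD(4)[OF y] .
    have "p \<cdot> (w \<cdot> y) = u \<cdot> (q \<cdot> y)"
      using comp_assoc[OF y wq(1) p] comp_assoc[OF y wq(2) u] wq(3) by simp
    also have "\<dots> = Zer C T Z" using qy comp_zero[OF u T] by simp
    finally obtain x where x: "x \<in> Hom T X" "i \<cdot> x = w \<cdot> y"
      using kernel_factor[OF ker i p comp_hom[OF y wq(1)]] by blast
    have "w \<cdot> (k \<cdot> x) = w \<cdot> y" using comp_assoc[OF x(1) k(1) wq(1)] k(2) x(2) by simp
    moreover have "q \<cdot> (k \<cdot> x) = q \<cdot> y"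
      using comp_assoc[OF x(1) k(1) wq(2)] k(3) zero_comp[OF x(1) Z'] qy by simp
    ultimately have "k \<cdot> x = y"
      using pullback_unique[OF pb p u wq(1) comp_hom[OF x(1) k(1)] y] by blast
    then show "\<exists>h\<in>Hom T X. k \<cdot> h = y" using x(1) by blast
  next
    show "monic k"
      using monic_cancel[OF k(1) wq(1)] k(2) kernel_monic[OF ker] by simp
  qed
  then show ?thesis using k by blast
qed

lemma kernel_through_monic:
  assumes ker: "is_kernel C u f" "u \<in> Hom K Y" "f \<in> Hom Y B"
    and w: "w \<in> Hom P Y" "monic w" and j: "j \<in> Hom K P" "w \<cdot> j = u"
    and g: "g \<in> Hom P A" and a: "a \<in> Hom A B" "monic a" and square: "a \<cdot> g = f \<cdot> w"
  shows "is_kernel C j g"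
proof (rule is_kernelI[OF j(1) g])
  have K: "K \<in> Ob C" using homD(4)[OF j(1)] .
  have "a \<cdot> (g \<cdot> j) = a \<cdot> Zer C K A"
    using comp_assoc[OF j(1) g a(1)] square comp_assoc[OF j(1) w(1) ker(3)] j(2)
      kernel_zero[OF ker] comp_zero[OF a(1) K] by simp
  then show "g \<cdot> j = Zer C K A"
    by (rule monicD[OF a(2) a(1) comp_hom[OF j(1) g] zero_hom[OF K homD(4)[OF a(1)]]])
next
  fix T x assume x: "x \<in> Hom T P" and gx: "g \<cdot> x = Zer C T A"
  have "f \<cdot> (w \<cdot> x) = Zer C T B"
    using comp_assoc[OF x w(1) ker(3)] square comp_assoc[OF x g a(1)] gx comp_zero[OF a(1) homD(4)[OF x]]
    by simp
  then obtain h where h: "h \<in> Hom T K" "u \<cdot> h = w \<cdot> x"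
    using kernel_factor[OF ker comp_hom[OF x w(1)]] by blast
  have "w \<cdot> (j \<cdot> h) = w \<cdot> x" using comp_assoc[OF h(1) j(1) w(1)] j(2) h(2) by simp
  then show "\<exists>h\<in>Hom T K. j \<cdot> h = x"
    using monicD[OF w(2) w(1) comp_hom[OF h(1) j(1)] x] h(1) by blast
next
  show "monic j" using monic_cancel[OF j(1) w(1)] j(2) kernel_monic[OF ker(1)] by simp
qed

lemma kernel_of_restriction:
  assumes kq: "is_kernel C k q" and k: "k \<in> Hom X P" and q: "q \<in> Hom P Z"
    and ug: "is_kernel C u (g \<cdot> k)" and u: "u \<in> Hom X' X" and g: "g \<in> Hom P A"
    and jg: "is_kernel C j g" and j: "j \<in> Hom K P"
    and i: "i \<in> Hom X' K" and square: "j \<cdot> i = k \<cdot> u"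
  shows "is_kernel C i (q \<cdot> j)"
proof (rule is_kernelI[OF i comp_hom[OF j q]])
  have X': "X' \<in> Ob C" using homD(4)[OF u] .
  show "(q \<cdot> j) \<cdot> i = Zer C X' Z"
    using comp_assoc[OF i j q] square comp_assoc[OF u k q] kernel_zero[OF kq k q] zero_comp[OF u]
      homD(5)[OF q] by simp
next
  fix T y assume y: "y \<in> Hom T K" and qjy: "(q \<cdot> j) \<cdot> y = Zer C T Z"
  have T: "T \<in> Ob C" using homD(4)[OF y] .
  obtain x where x: "x \<in> Hom T X" "k \<cdot> x = j \<cdot> y"
    using kernel_factor[OF kq k q comp_hom[OF y j]] qjy comp_assoc[OF y j q] by auto
  have "(g \<cdot> k) \<cdot> x = g \<cdot> (j \<cdot> y)" using comp_assoc[OF x(1) k g] x(2) by simp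
  also have "\<dots> = Zer C T A"
    using comp_assoc[OF y j g] kernel_zero[OF jg j g] zero_comp[OF y homD(5)[OF g]] by simp
  finally obtain z where z: "z \<in> Hom T X'" "u \<cdot> z = x"
    using kernel_factor[OF ug u comp_hom[OF k g] x(1)] by blast
  have "j \<cdot> (i \<cdot> z) = j \<cdot> y"
    using comp_assoc[OF z(1) i j] square comp_assoc[OF z(1) u k] z(2) x(2) by simp
  then show "\<exists>h\<in>Hom T X'. i \<cdot> h = y"
    using monicD[OF kernel_monic[OF jg] j comp_hom[OF z(1) i] y] z(1) by blast
next
  have "monic (k \<cdot> u)"
    using monic_comp[OF u k kernel_monic[OF ug] kernel_monic[OF kq]] .
  then show "monic i" using monic_cancel[OF i j] square by simp
qed

lemma kernel_square_pullback:
  assumes uX: "is_kernel C uX vX" "uX \<in> Hom X' X" "vX \<in> Hom X A"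
    and uY: "is_kernel C uY f" "uY \<in> Hom Y' Y" "f \<in> Hom Y B"
    and i: "i \<in> Hom X Y" and a: "a \<in> Hom A B" "monic a" and lower: "f \<cdot> i = a \<cdot> vX"
    and i': "i' \<in> Hom X' Y'" and upper: "i \<cdot> uX = uY \<cdot> i'"
  shows "is_pullback C i uY uX i'"
proof (rule is_pullbackI[OF i uY(2) uX(2) i' upper _ kernel_monic[OF uX(1)]])
  fix T x y assume x: "x \<in> Hom T X" and y: "y \<in> Hom T Y'" and ixy: "i \<cdot> x = uY \<cdot> y"
  have T: "T \<in> Ob C" using homD(4)[OF x] .
  have "a \<cdot> (vX \<cdot> x) = f \<cdot> (i \<cdot> x)"
    using comp_assoc[OF x uX(3) a(1)] lower comp_assoc[OF x i uY(3)] by simp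
  also have "\<dots> = (f \<cdot> uY) \<cdot> y" using ixy comp_assoc[OF y uY(2,3)] by simp
  also have "\<dots> = a \<cdot> Zer C T A"
    using kernel_zero[OF uY] zero_comp[OF y homD(5)[OF uY(3)]] comp_zero[OF a(1) T] by simp
  finally have "vX \<cdot> x = Zer C T A"
    using monicD[OF a(2) a(1) comp_hom[OF x uX(3)] zero_hom[OF T homD(4)[OF a(1)]]] by simp
  then obtain h where h: "h \<in> Hom T X'" "uX \<cdot> h = x"
    using kernel_factor[OF uX x] by blast
  have "uY \<cdot> (i' \<cdot> h) = uY \<cdot> y"
    using comp_assoc[OF h(1) i' uY(2)] upper comp_assoc[OF h(1) uX(2) i] h(2) ixy by simp
  then have "i' \<cdot> h = y"
    using monicD[OF kernel_monic[OF uY(1)] uY(2) comp_hom[OF h(1) i'] y] by simp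
  then show "\<exists>h\<in>Hom T X'. uX \<cdot> h = x \<and> i' \<cdot> h = y" using h by blast
qed

lemma cokernel_square_pushout:
  assumes p: "is_cokernel C p i" "i \<in> Hom X Y" "p \<in> Hom Y Z"
    and c: "is_cokernel C c a" "a \<in> Hom A B" "c \<in> Hom B C'"
    and f: "f \<in> Hom Y B" and vX: "vX \<in> Hom X A" "epic vX" and left: "f \<cdot> i = a \<cdot> vX"
    and vZ: "vZ \<in> Hom Z C'" and right: "vZ \<cdot> p = c \<cdot> f"
  shows "is_pushout C p f vZ c"
proof (rule is_pushoutI[OF p(3) f vZ c(3) right _ cokernel_epic[OF c(1)]])
  fix T x y assume x: "x \<in> Hom Z T" and y: "y \<in> Hom B T" and xy: "x \<cdot> p = y \<cdot> f"
  have T: "T \<in> Ob C" using homD(5)[OF x] .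
  have "(y \<cdot> a) \<cdot> vX = (y \<cdot> f) \<cdot> i"
    using comp_assoc[OF vX(1) c(2) y] left comp_assoc[OF p(2) f y] by simp
  also have "\<dots> = x \<cdot> (p \<cdot> i)" using xy comp_assoc[OF p(2,3) x] by simp
  also have "\<dots> = Zer C A T \<cdot> vX"
    using cokernel_zero[OF p] comp_zero[OF x homD(4)[OF p(2)]] zero_comp[OF vX(1) T] by simp
  finally have "y \<cdot> a = Zer C A T"
    using epicD[OF vX(2) vX(1) comp_hom[OF c(2) y] zero_hom[OF homD(5)[OF vX(1)] T]] by simp
  then obtain h where h: "h \<in> Hom C' T" "h \<cdot> c = y"
    using cokernel_factor[OF c y] by blast
  have "(h \<cdot> vZ) \<cdot> p = x \<cdot> p"
    using comp_assoc[OF p(3) vZ h(1)] right comp_assoc[OF f c(3) h(1)] h(2) xy by simp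
  then have "h \<cdot> vZ = x"
    using epicD[OF cokernel_epic[OF p(1)] p(3) comp_hom[OF vZ h(1)] x] by simp
  then show "\<exists>h\<in>Hom C' T. h \<cdot> vZ = x \<and> h \<cdot> c = y" using h by blast
qed

definition is_biproduct :: "'o \<Rightarrow> 'o \<Rightarrow> 'o \<Rightarrow> 'm \<Rightarrow> 'm \<Rightarrow> 'm \<Rightarrow> 'm \<Rightarrow> bool" where
  "is_biproduct A B Q m n r s \<longleftrightarrow>
     m \<in> Hom A Q \<and> n \<in> Hom B Q \<and> r \<in> Hom Q A \<and> s \<in> Hom Q B \<and>
     r \<cdot> m = Ident C A \<and> s \<cdot> n = Ident C B \<and> r \<cdot> n = Zer C B A \<and> s \<cdot> m = Zer C A B \<and>
     m \<cdot> r \<oplus> n \<cdot> s = Ident C Q"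

lemma biproduct_from_retraction:
  assumes q: "is_cokernel C q k" "k \<in> Hom X P" "q \<in> Hom P Z"
    and e: "e \<in> Hom P Q" "epic e" and m: "m \<in> Hom A Q" and g: "g \<in> Hom P A"
    and square: "e \<cdot> k = m \<cdot> (g \<cdot> k)"
    and r: "r \<in> Hom Q A" "r \<cdot> e = g" "r \<cdot> m = Ident C A"
    and s: "s \<in> Hom Q Z" "s \<cdot> e = q" "s \<cdot> m = Zer C A Z"
  shows "\<exists>n. is_biproduct A Z Q m n r s"
proof -
  have X: "X \<in> Ob C" and A: "A \<in> Ob C" and Z: "Z \<in> Ob C" and P: "P \<in> Ob C"
    using homD[OF q(2)] homD[OF g] homD[OF q(3)] by simp_all
  obtain g' where g': "g' \<in> Hom P A" "g \<oplus> g' = Zer C P A" using additive_inverse[OF g] by blast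
  have mg': "m \<cdot> g' \<in> Hom P Q" using comp_hom[OF g'(1) m] .
  define e' where "e' = e \<oplus> m \<cdot> g'"
  \<comment> \<open>e' = e - m g kills k, so it factors through the cokernel q\<close>
  have e': "e' \<in> Hom P Q" unfolding e'_def using plus_hom[OF e(1) mg'] .
  have "e' \<cdot> k = m \<cdot> ((g \<oplus> g') \<cdot> k)"
    unfolding e'_def using comp_plus_left[OF q(2) e(1) mg'] square comp_assoc[OF q(2) g'(1) m]
      comp_plus_right[OF comp_hom[OF q(2) g] comp_hom[OF q(2) g'(1)] m] comp_plus_left[OF q(2) g g'(1)]
    by simp
  also have "\<dots> = Zer C X Q" using g'(2) zero_comp[OF q(2) A] comp_zero[OF m X] by simp
  finally obtain n where n: "n \<in> Hom Z Q" "n \<cdot> q = e'"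
    using cokernel_factor[OF q e'] by blast
  have "(r \<cdot> n) \<cdot> q = g \<oplus> g'"
    using comp_assoc[OF q(3) n(1) r(1)] n(2) comp_plus_right[OF e(1) mg' r(1)] r(2)
      comp_assoc[OF g'(1) m r(1)] r(3) ident_left[OF g'(1)] unfolding e'_def by simp
  then have rn: "r \<cdot> n = Zer C Z A"
    using epicD[OF cokernel_epic[OF q(1)] q(3) comp_hom[OF n(1) r(1)] zero_hom[OF Z A]]
      g'(2) zero_comp[OF q(3) A] by simp
  have "(s \<cdot> n) \<cdot> q = q \<oplus> Zer C P Z"
    using comp_assoc[OF q(3) n(1) s(1)] n(2) comp_plus_right[OF e(1) mg' s(1)] s(2)
      comp_assoc[OF g'(1) m s(1)] s(3) zero_comp[OF g'(1) Z] unfolding e'_def by simp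
  then have sn: "s \<cdot> n = Ident C Z"
    using epicD[OF cokernel_epic[OF q(1)] q(3) comp_hom[OF n(1) s(1)] ident_hom[OF Z]]
      plus_zero_right[OF q(3)] ident_left[OF q(3)] by simp
  have mr: "m \<cdot> r \<in> Hom Q Q" and ns: "n \<cdot> s \<in> Hom Q Q"
    using comp_hom[OF r(1) m] comp_hom[OF s(1) n(1)] .
  have "(m \<cdot> r \<oplus> n \<cdot> s) \<cdot> e = m \<cdot> g \<oplus> e'"
    using comp_plus_left[OF e(1) mr ns] comp_assoc[OF e(1) r(1) m] comp_assoc[OF e(1) s(1) n(1)]
      r(2) s(2) n(2) by simp
  also have "\<dots> = e \<oplus> m \<cdot> (g \<oplus> g')"
    unfolding e'_def using plus_assoc[OF comp_hom[OF g m] e(1) mg'] plus_commute[OF comp_hom[OF g m] e(1)]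
      plus_assoc[OF e(1) comp_hom[OF g m] mg'] comp_plus_right[OF g g'(1) m] by simp
  also have "\<dots> = Ident C Q \<cdot> e"
    using g'(2) comp_zero[OF m P] plus_zero_right[OF e(1)] ident_left[OF e(1)] by simp
  finally have "m \<cdot> r \<oplus> n \<cdot> s = Ident C Q"
    using epicD[OF e(2) e(1) plus_hom[OF mr ns] ident_hom[OF homD(5)[OF e(1)]]] by simp
  then show ?thesis
    unfolding is_biproduct_def using m n(1) r s rn sn by blast
qed

lemma pullback_along_biproduct_injection:
  assumes bp: "is_biproduct A B Q m n r s" and e: "e \<in> Hom P Q"
    and ker: "is_kernel C j (r \<cdot> e)" and j: "j \<in> Hom K P"
  shows "is_pullback C e n j ((s \<cdot> e) \<cdot> j)"
proof -
  have m: "m \<in> Hom A Q" and n: "n \<in> Hom B Q" and r: "r \<in> Hom Q A" and s: "s \<in> Hom Q B"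
    and rn: "r \<cdot> n = Zer C B A" and sn: "s \<cdot> n = Ident C B" and split: "m \<cdot> r \<oplus> n \<cdot> s = Ident C Q"
    using bp unfolding is_biproduct_def by blast+
  have re: "r \<cdot> e \<in> Hom P A" and se: "s \<cdot> e \<in> Hom P B" using comp_hom e r s by blast+
  have ej: "e \<cdot> j \<in> Hom K Q" using comp_hom[OF j e] .
  have K: "K \<in> Ob C" using homD(4)[OF j] .
  have rej: "r \<cdot> (e \<cdot> j) = Zer C K A"
    using comp_assoc[OF j e r] kernel_zero[OF ker j re] by simp
  have "e \<cdot> j = (m \<cdot> r \<oplus> n \<cdot> s) \<cdot> (e \<cdot> j)" using split ident_left[OF ej] by simp
  also have "\<dots> = m \<cdot> (r \<cdot> (e \<cdot> j)) \<oplus> n \<cdot> (s \<cdot> (e \<cdot> j))"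
    using comp_plus_left[OF ej comp_hom[OF r m] comp_hom[OF s n]] comp_assoc[OF ej r m]
      comp_assoc[OF ej s n] by simp
  also have "\<dots> = n \<cdot> ((s \<cdot> e) \<cdot> j)"
    using rej comp_zero[OF m K] plus_zero_left[OF comp_hom[OF comp_hom[OF ej s] n]]
      comp_assoc[OF j e s] by simp
  finally have square: "e \<cdot> j = n \<cdot> ((s \<cdot> e) \<cdot> j)" .
  show ?thesis
  proof (rule is_pullbackI[OF e n j comp_hom[OF j se] square _ kernel_monic[OF ker]])
    fix T x y assume x: "x \<in> Hom T P" and y: "y \<in> Hom T B" and exy: "e \<cdot> x = n \<cdot> y"
    have "(r \<cdot> e) \<cdot> x = (r \<cdot> n) \<cdot> y" using comp_assoc[OF x e r] comp_assoc[OF y n r] exy by simp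
    also have "\<dots> = Zer C T A" using rn zero_comp[OF y homD(5)[OF r]] by simp
    finally obtain h where h: "h \<in> Hom T K" "j \<cdot> h = x"
      using kernel_factor[OF ker j re x] by blast
    have "((s \<cdot> e) \<cdot> j) \<cdot> h = (s \<cdot> n) \<cdot> y"
      using comp_assoc[OF h(1) j se] h(2) comp_assoc[OF x e s] exy comp_assoc[OF y n s] by simp
    then have "((s \<cdot> e) \<cdot> j) \<cdot> h = y" using sn ident_left[OF y] by simp
    then show "\<exists>h\<in>Hom T K. j \<cdot> h = x \<and> ((s \<cdot> e) \<cdot> j) \<cdot> h = y" using h by blast
  qed
qed

end

locale conflation_cat =
  fixes C :: "('o, 'm) cat" and E :: "('m \<times> 'm) set"
  assumes conflation_category: "conflation_category C E"

sublocale conflation_cat \<subseteq> preadditive_cat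
  using conflation_category unfolding conflation_category_def additive_def
  by unfold_locales blast

context conflation_cat
begin

lemma conflation_kernel: "(i, p) \<in> E \<Longrightarrow> is_kernel C i p"
  using conflation_category unfolding conflation_category_def kc_pair_def by blast

lemma conflation_cokernel: "(i, p) \<in> E \<Longrightarrow> is_cokernel C p i"
  using conflation_category unfolding conflation_category_def kc_pair_def by blast

lemma conflation_homs:
  assumes "(i, p) \<in> E"
  shows "i \<in> Hom (Dom C i) (Dom C p)" "p \<in> Hom (Dom C p) (Cod C p)"
proof -
  have "i \<in> Ar C" "p \<in> Ar C" "Cod C i = Dom C p"
    using conflation_kernel[OF assms] unfolding is_kernel_def by blast+
  then show "i \<in> Hom (Dom C i) (Dom C p)" "p \<in> Hom (Dom C p) (Cod C p)"
    unfolding hom_def by auto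
qed

lemma deflation_kernel:
  assumes "deflation E p" "p \<in> Hom Y Z"
  obtains k K where "(k, p) \<in> E" "k \<in> Hom K Y"
  using assms conflation_homs(1) homD(2) unfolding deflation_def by metis

lemma inflation_cokernel:
  assumes "inflation E i" "i \<in> Hom X Y"
  obtains c Z where "(i, c) \<in> E" "c \<in> Hom Y Z"
  using assms conflation_homs homD(3) unfolding inflation_def by metis

lemma deflation_epic: "deflation E p \<Longrightarrow> epic p"
  using conflation_cokernel cokernel_epic unfolding deflation_def by blast

lemma inflation_monic: "inflation E i \<Longrightarrow> monic i"
  using conflation_kernel kernel_monic unfolding inflation_def by blast

lemma conflation_iso_closed:
  assumes "(i, p) \<in> E" "i' \<in> Ar C" "p' \<in> Ar C" "Cod C i' = Dom C p'"
    "iso C a" "iso C b" "iso C c"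
    "Dom C a = Dom C i" "Cod C a = Dom C i'" "Dom C b = Cod C i" "Cod C b = Cod C i'"
    "Dom C c = Cod C p" "Cod C c = Cod C p'" "b \<cdot> i = i' \<cdot> a" "c \<cdot> p = p' \<cdot> b"
  shows "(i', p') \<in> E"
  using conflation_category assms unfolding conflation_category_def by blast

lemma kernel_conflation:
  assumes kq: "(k, q) \<in> E" and ker: "is_kernel C k' q"
  shows "(k', q) \<in> E"
proof -
  have k: "k \<in> Hom (Dom C k) (Dom C q)" and q: "q \<in> Hom (Dom C q) (Cod C q)"
    using conflation_homs[OF kq] .
  have "k' \<in> Ar C" "Cod C k' = Dom C q" using ker unfolding is_kernel_def by blast+
  then have k': "k' \<in> Hom (Dom C k') (Dom C q)" unfolding hom_def by blast
  note ker_k = conflation_kernel[OF kq]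
  obtain \<phi> where \<phi>: "\<phi> \<in> Hom (Dom C k) (Dom C k')" "k' \<cdot> \<phi> = k"
    using kernel_factor[OF ker k' q k kernel_zero[OF ker_k k q]] by blast
  obtain \<psi> where \<psi>: "\<psi> \<in> Hom (Dom C k') (Dom C k)" "k \<cdot> \<psi> = k'"
    using kernel_factor[OF ker_k k q k' kernel_zero[OF ker k' q]] by blast
  have "k \<cdot> (\<psi> \<cdot> \<phi>) = k \<cdot> Ident C (Dom C k)"
    using comp_assoc[OF \<phi>(1) \<psi>(1) k] \<phi>(2) \<psi>(2) ident_right[OF k] by simp
  then have \<psi>\<phi>: "\<psi> \<cdot> \<phi> = Ident C (Dom C k)"
    using monicD[OF kernel_monic[OF ker_k] k comp_hom[OF \<phi>(1) \<psi>(1)] ident_hom[OF homD(4)[OF k]]]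
    by simp
  have "k' \<cdot> (\<phi> \<cdot> \<psi>) = k' \<cdot> Ident C (Dom C k')"
    using comp_assoc[OF \<psi>(1) \<phi>(1) k'] \<phi>(2) \<psi>(2) ident_right[OF k'] by simp
  then have \<phi>\<psi>: "\<phi> \<cdot> \<psi> = Ident C (Dom C k')"
    using monicD[OF kernel_monic[OF ker] k' comp_hom[OF \<psi>(1) \<phi>(1)] ident_hom[OF homD(4)[OF k']]]
    by simp
  show ?thesis
    using conflation_iso_closed[OF kq, of k' q \<phi> "Ident C (Dom C q)" "Ident C (Cod C q)"]
      isoI[OF \<phi>(1) \<psi>(1) \<psi>\<phi> \<phi>\<psi>] ident_iso homD[OF k] homD[OF k'] homD[OF q] homD[OF \<phi>(1)]
      ident_left[OF k] ident_left[OF q] ident_right[OF q] \<phi>(2) Dom_Cod_Ident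
    by simp
qed

lemma deflation_iso_comp:
  assumes d: "deflation E d" and \<phi>: "\<phi> \<in> Hom (Cod C d) V" "iso C \<phi>"
  shows "deflation E (\<phi> \<cdot> d)"
proof -
  obtain k where kd: "(k, d) \<in> E" using d unfolding deflation_def by blast
  note k = conflation_homs(1)[OF kd] and d = conflation_homs(2)[OF kd]
  have "(k, \<phi> \<cdot> d) \<in> E"
    using conflation_iso_closed[OF kd, of k "\<phi> \<cdot> d" "Ident C (Dom C k)" "Ident C (Dom C d)" \<phi>]
      \<phi> comp_hom[OF d \<phi>(1)] ident_iso ident_hom homD[OF k] homD[OF d] homD[OF \<phi>(1)]
      homD[OF comp_hom[OF d \<phi>(1)]] ident_left[OF k] ident_right[OF k] ident_right[OF comp_hom[OF d \<phi>(1)]] Dom_Cod_Ident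
    by simp
  then show ?thesis unfolding deflation_def by blast
qed

lemma deflation_comp_iso:
  assumes d: "deflation E d" and \<phi>: "\<phi> \<in> Hom U (Dom C d)" "iso C \<phi>"
  shows "deflation E (d \<cdot> \<phi>)"
proof -
  obtain k where kd: "(k, d) \<in> E" using d unfolding deflation_def by blast
  note k = conflation_homs(1)[OF kd] and d = conflation_homs(2)[OF kd]
  obtain \<psi> where \<psi>: "\<psi> \<in> Hom (Dom C d) U" "\<psi> \<cdot> \<phi> = Ident C U" "\<phi> \<cdot> \<psi> = Ident C (Dom C d)"
    using isoE[OF \<phi>(2,1)] by blast
  have "(d \<cdot> \<phi>) \<cdot> \<psi> = d" using comp_assoc[OF \<psi>(1) \<phi>(1) d] \<psi>(3) ident_right[OF d] by simp
  then have "(\<psi> \<cdot> k, d \<cdot> \<phi>) \<in> E"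
    using conflation_iso_closed[OF kd, of "\<psi> \<cdot> k" "d \<cdot> \<phi>" "Ident C (Dom C k)" \<psi> "Ident C (Cod C d)"]
      isoI[OF \<psi>(1) \<phi>(1) \<psi>(3,2)] ident_iso comp_hom[OF k \<psi>(1)] comp_hom[OF \<phi>(1) d]
      homD[OF k] homD[OF d] homD[OF \<psi>(1)] homD[OF comp_hom[OF k \<psi>(1)]] homD[OF comp_hom[OF \<phi>(1) d]]
      ident_right[OF comp_hom[OF k \<psi>(1)]] ident_left[OF d] Dom_Cod_Ident
    by simp
  then show ?thesis unfolding deflation_def by blast
qed

lemma inflation_iso_if_comp_deflation:
  assumes m: "inflation E m" "m \<in> Hom U V" and g: "g \<in> Hom T U" and mg: "deflation E (m \<cdot> g)"
  shows "iso C m"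
proof -
  have mg_hom: "m \<cdot> g \<in> Hom T V" using comp_hom[OF g m(2)] .
  obtain k K where kmg: "(k, m \<cdot> g) \<in> E" and k: "k \<in> Hom K T"
    using deflation_kernel[OF mg mg_hom] .
  have K: "K \<in> Ob C" using homD(4)[OF k] .
  have "m \<cdot> (g \<cdot> k) = m \<cdot> Zer C K U"
    using comp_assoc[OF k g m(2)] kernel_zero[OF conflation_kernel[OF kmg] k mg_hom] comp_zero[OF m(2) K]
    by simp
  then have "g \<cdot> k = Zer C K U"
    by (rule monicD[OF inflation_monic[OF m(1)] m(2) comp_hom[OF k g] zero_hom[OF K homD(4)[OF m(2)]]])
  then obtain h where h: "h \<in> Hom V U" "h \<cdot> (m \<cdot> g) = g"
    using cokernel_factor[OF conflation_cokernel[OF kmg] k mg_hom g] by blast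
  have "(m \<cdot> h) \<cdot> (m \<cdot> g) = Ident C V \<cdot> (m \<cdot> g)"
    using comp_assoc[OF mg_hom h(1) m(2)] h(2) ident_left[OF mg_hom] by simp
  then have mh: "m \<cdot> h = Ident C V"
    by (rule epicD[OF deflation_epic[OF mg] mg_hom comp_hom[OF h(1) m(2)] ident_hom[OF homD(5)[OF m(2)]]])
  have "m \<cdot> (h \<cdot> m) = m \<cdot> Ident C U"
    using comp_assoc[OF m(2) h(1) m(2)] mh ident_left[OF m(2)] ident_right[OF m(2)] by simp
  then have "h \<cdot> m = Ident C U"
    by (rule monicD[OF inflation_monic[OF m(1)] m(2) comp_hom[OF m(2) h(1)] ident_hom[OF homD(4)[OF m(2)]]])
  then show ?thesis using isoI[OF m(2) h(1)] mh by blast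
qed

lemma pushout_along_conflation_splits:
  assumes kq: "(k, q) \<in> E" "k \<in> Hom X P" "q \<in> Hom P Z" and g: "g \<in> Hom P A"
    and po: "is_pushout C k (g \<cdot> k) e m" and "epic e"
  shows "\<exists>Q n r s. e \<in> Hom P Q \<and> is_biproduct A Z Q m n r s \<and> r \<cdot> e = g \<and> s \<cdot> e = q"
proof -
  have gk: "g \<cdot> k \<in> Hom X A" using comp_hom[OF kq(2) g] .
  define Q where "Q = Cod C e"
  have e: "e \<in> Hom P Q" and m: "m \<in> Hom A Q" and square: "e \<cdot> k = m \<cdot> (g \<cdot> k)"
    using pushout_homs[OF po kq(2) gk] unfolding Q_def by auto
  have A: "A \<in> Ob C" and Z: "Z \<in> Ob C" using homD[OF g] homD[OF kq(3)] by simp_all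
  obtain r where r: "r \<in> Hom Q A" "r \<cdot> e = g" "r \<cdot> m = Ident C A"
    using pushout_factor[OF po kq(2) gk e g ident_hom[OF A]] ident_left[OF gk] by metis
  have "q \<cdot> k = Zer C A Z \<cdot> (g \<cdot> k)"
    using kernel_zero[OF conflation_kernel[OF kq(1)] kq(2,3)] zero_comp[OF gk Z] by simp
  then obtain s where s: "s \<in> Hom Q Z" "s \<cdot> e = q" "s \<cdot> m = Zer C A Z"
    using pushout_factor[OF po kq(2) gk e kq(3) zero_hom[OF A Z]] by blast
  obtain n where "is_biproduct A Z Q m n r s"
    using biproduct_from_retraction[OF conflation_cokernel[OF kq(1)] kq(2,3) e \<open>epic e\<close> m g square r s]
    by blast
  then show ?thesis using e r(2) s(2) by blast
qed

end

locale deflation_exact_cat =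
  fixes C :: "('o, 'm) cat" and E :: "('m \<times> 'm) set"
  assumes deflation_exact: "deflation_exact C E"

sublocale deflation_exact_cat \<subseteq> conflation_cat
  using deflation_exact unfolding deflation_exact_def by unfold_locales blast

context deflation_exact_cat
begin

lemma deflation_comp:
  "deflation E p \<Longrightarrow> deflation E q \<Longrightarrow> Cod C p = Dom C q \<Longrightarrow> deflation E (q \<cdot> p)"
  using deflation_exact unfolding deflation_exact_def by blast

lemma deflation_pullback_exists:
  assumes "deflation E p" "f \<in> Ar C" "Cod C f = Cod C p"
  obtains a b where "is_pullback C p f a b" "deflation E b"
  using deflation_exact assms unfolding deflation_exact_def by blast

lemma pullback_of_deflation:
  assumes pb: "is_pullback C d u a b" and d: "deflation E d" "d \<in> Hom Y Z" and u: "u \<in> Hom W Z"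
  shows "deflation E b"
proof -
  obtain a' b' where pb': "is_pullback C d u a' b'" and b': "deflation E b'"
    using deflation_pullback_exists[OF d(1) homD(1)[OF u]] homD(3)[OF u] homD(3)[OF d(2)] by metis
  define P where "P = Dom C a"
  define P' where "P' = Dom C a'"
  note ab = pullback_homs[OF pb d(2) u, folded P_def]
    and ab' = pullback_homs[OF pb' d(2) u, folded P'_def]
  have P: "P \<in> Ob C" and P': "P' \<in> Ob C" using homD(4) ab(1) ab'(1) by blast+
  obtain \<phi> where \<phi>: "\<phi> \<in> Hom P P'" "a' \<cdot> \<phi> = a" "b' \<cdot> \<phi> = b"
    using pullback_factor[OF pb' d(2) u ab'(1) ab(1,2,3)] by blast
  obtain \<psi> where \<psi>: "\<psi> \<in> Hom P' P" "a \<cdot> \<psi> = a'" "b \<cdot> \<psi> = b'"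
    using pullback_factor[OF pb d(2) u ab(1) ab'(1,2,3)] by blast
  have "\<psi> \<cdot> \<phi> = Ident C P"
    using pullback_unique[OF pb d(2) u ab(1) comp_hom[OF \<phi>(1) \<psi>(1)] ident_hom[OF P]]
      comp_assoc[OF \<phi>(1) \<psi>(1) ab(1)] comp_assoc[OF \<phi>(1) \<psi>(1) ab(2)] \<phi> \<psi>
      ident_right[OF ab(1)] ident_right[OF ab(2)] by simp
  moreover have "\<phi> \<cdot> \<psi> = Ident C P'"
    using pullback_unique[OF pb' d(2) u ab'(1) comp_hom[OF \<psi>(1) \<phi>(1)] ident_hom[OF P']]
      comp_assoc[OF \<psi>(1) \<phi>(1) ab'(1)] comp_assoc[OF \<psi>(1) \<phi>(1) ab'(2)] \<phi> \<psi>
      ident_right[OF ab'(1)] ident_right[OF ab'(2)] by simp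
  ultimately have "iso C \<phi>" using isoI[OF \<phi>(1) \<psi>(1)] by blast
  then show ?thesis
    using deflation_comp_iso[OF b', of \<phi> P] \<phi> homD(2)[OF ab'(2)] unfolding P'_def by simp
qed

lemma conflation_pullback:
  assumes ip: "(i, p) \<in> E" "i \<in> Hom X Y" "p \<in> Hom Y Z" and u: "u \<in> Hom Z' Z"
  obtains w q k where "is_pullback C p u w q" "(k, q) \<in> E" "k \<in> Hom X (Dom C w)" "w \<cdot> k = i"
proof -
  have "deflation E p" using ip(1) unfolding deflation_def by blast
  then obtain w q where pb: "is_pullback C p u w q" and q: "deflation E q"
    using deflation_pullback_exists homD(1,3)[OF u] homD(3)[OF ip(3)] by metis
  obtain k where k: "k \<in> Hom X (Dom C w)" "w \<cdot> k = i" "is_kernel C k q"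
    using kernel_of_pullback[OF pb ip(3) u conflation_kernel[OF ip(1)] ip(2)] by blast
  obtain k' where "(k', q) \<in> E" using q unfolding deflation_def by blast
  then have "(k, q) \<in> E" using kernel_conflation k(3) by blast
  then show ?thesis using that pb k by blast
qed

end

locale deflation_percolating_cat = deflation_exact_cat C E
  for C :: "('o, 'm) cat" and E :: "('m \<times> 'm) set" +
  fixes \<A> :: "'o set"
  assumes percolating: "adm_defl_percolating C E \<A>"
begin

lemma conflation_in_A_iff:
  "(i, p) \<in> E \<Longrightarrow> Cod C i \<in> \<A> \<longleftrightarrow> Dom C i \<in> \<A> \<and> Cod C p \<in> \<A>"
  using percolating unfolding adm_defl_percolating_def by blast

lemma factorization_through_A:
  assumes f: "f \<in> Hom Y B" and B: "B \<in> \<A>"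
  obtains d m A where "deflation E d" "inflation E m" "d \<in> Hom Y A" "m \<in> Hom A B" "A \<in> \<A>"
    "f = m \<cdot> d"
proof -
  have "\<forall>f\<in>Ar C. Cod C f \<in> \<A> \<longrightarrow> (\<exists>d m. deflation E d \<and> inflation E m \<and> Dom C d = Dom C f \<and>
      Cod C d = Dom C m \<and> Cod C m = Cod C f \<and> Dom C m \<in> \<A> \<and> f = m \<cdot> d)"
    using percolating unfolding adm_defl_percolating_def by (elim conjE)
  then obtain d m where "deflation E d" "inflation E m" "Dom C d = Y" "Cod C d = Dom C m"
      "Cod C m = B" "Dom C m \<in> \<A>" "f = m \<cdot> d"
    using f B homD[OF f] by metis
  moreover have "d \<in> Ar C" "m \<in> Ar C"
    using \<open>deflation E d\<close> \<open>inflation E m\<close> conflation_homs homD(1)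
    unfolding deflation_def inflation_def by metis+
  ultimately show ?thesis using that unfolding hom_def by auto
qed

lemma pushout_into_A:
  assumes "inflation E a" "deflation E b" "a \<in> Hom X Y" "b \<in> Hom X A" "A \<in> \<A>"
  obtains e m where "is_pushout C a b e m" "deflation E e" "inflation E m"
  using percolating assms homD(2,3)[OF assms(3)] homD(2,3)[OF assms(4)]
  unfolding adm_defl_percolating_def by metis

lemma deflation_if_comp_deflation_into_A:
  assumes h: "h \<in> Hom Z T" "T \<in> \<A>" and g: "g \<in> Hom Y Z" and hg: "deflation E (h \<cdot> g)"
  shows "deflation E h"
proof -
  obtain d m A where d: "deflation E d" "d \<in> Hom Z A" and m: "inflation E m" "m \<in> Hom A T"
    and hdm: "h = m \<cdot> d"
    using factorization_through_A[OF h] by metis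
  have "m \<cdot> (d \<cdot> g) = h \<cdot> g" using comp_assoc[OF g d(2) m(2)] hdm by simp
  then have "iso C m"
    using inflation_iso_if_comp_deflation[OF m comp_hom[OF g d(2)]] hg by simp
  then show ?thesis using deflation_iso_comp[OF d(1)] m(2) homD(3)[OF d(2)] hdm by simp
qed

lemma kernel_restriction_conflation:
  assumes kq: "(k, q) \<in> E" "k \<in> Hom X P" "q \<in> Hom P Z"
    and g: "g \<in> Hom P A" "A \<in> \<A>" and u: "(u, g \<cdot> k) \<in> E" "u \<in> Hom X' X"
    and j: "is_kernel C j g" "j \<in> Hom K P"
    and i: "i \<in> Hom X' K" "j \<cdot> i = k \<cdot> u"
  shows "(i, q \<cdot> j) \<in> E"
proof -
  have "inflation E k" "deflation E (g \<cdot> k)" using kq(1) u(1) unfolding inflation_def deflation_def by blast+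
  then obtain e m where po: "is_pushout C k (g \<cdot> k) e m" and e: "deflation E e"
    using pushout_into_A[OF _ _ kq(2) comp_hom[OF kq(2) g(1)] g(2)] by metis
  then obtain Q n r s where eQ: "e \<in> Hom P Q" and bp: "is_biproduct A Z Q m n r s"
    and r: "r \<cdot> e = g" and s: "s \<cdot> e = q"
    using pushout_along_conflation_splits[OF kq g(1) po deflation_epic] by blast
  have n: "n \<in> Hom Z Q" using bp unfolding is_biproduct_def by blast
  have "is_pullback C e n j (q \<cdot> j)"
    using pullback_along_biproduct_injection[OF bp eQ _ j(2)] j(1) r s by simp
  then have "deflation E (q \<cdot> j)" using pullback_of_deflation[OF _ e eQ n] by blast
  moreover have "is_kernel C i (q \<cdot> j)"
    using kernel_of_restriction[OF conflation_kernel[OF kq(1)] kq(2,3) conflation_kernel[OF u(1)]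
        u(2) g(1) j i] .
  ultimately show ?thesis using kernel_conflation unfolding deflation_def by blast
qed

lemma morphism_onto_conflation_in_A:
  assumes ip: "(i, p) \<in> E" "i \<in> Hom X Y" "p \<in> Hom Y Z"
    and f: "deflation E f" "f \<in> Hom Y B" "B \<in> \<A>"
  obtains A0 C0 vX a c vZ where
    "vX \<in> Hom X A0" "deflation E vX" "(a, c) \<in> E" "a \<in> Hom A0 B" "c \<in> Hom B C0"
    "A0 \<in> \<A>" "C0 \<in> \<A>" "vZ \<in> Hom Z C0" "deflation E vZ" "f \<cdot> i = a \<cdot> vX" "vZ \<cdot> p = c \<cdot> f"
proof -
  obtain vX a A0 where vX: "deflation E vX" "vX \<in> Hom X A0" and a: "inflation E a" "a \<in> Hom A0 B"
    and A0: "A0 \<in> \<A>" and left: "f \<cdot> i = a \<cdot> vX"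
    using factorization_through_A[OF comp_hom[OF ip(2) f(2)] f(3)] by metis
  obtain c C0 where ac: "(a, c) \<in> E" and c: "c \<in> Hom B C0" using inflation_cokernel[OF a] .
  have C0: "C0 \<in> \<A>"
    using conflation_in_A_iff[OF ac] homD(2,3)[OF a(2)] homD(3)[OF c] A0 f(3) by simp
  have "(c \<cdot> f) \<cdot> i = (c \<cdot> a) \<cdot> vX"
    using comp_assoc[OF ip(2) f(2) c] left comp_assoc[OF vX(2) a(2) c] by simp
  also have "\<dots> = Zer C X C0"
    using kernel_zero[OF conflation_kernel[OF ac] a(2) c] zero_comp[OF vX(2) homD(5)[OF c]] by simp
  finally obtain vZ where vZ: "vZ \<in> Hom Z C0" "vZ \<cdot> p = c \<cdot> f"
    using cokernel_factor[OF conflation_cokernel[OF ip(1)] ip(2,3) comp_hom[OF f(2) c]] by blast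
  have "deflation E c" using ac unfolding deflation_def by blast
  then have "deflation E (c \<cdot> f)"
    using deflation_comp[OF f(1)] homD(3)[OF f(2)] homD(2)[OF c] by simp
  then have "deflation E vZ"
    using deflation_if_comp_deflation_into_A[OF vZ(1) C0 ip(3)] vZ(2) by simp
  then show ?thesis using that vX a(2) ac c A0 C0 vZ left by blast
qed

lemma kernel_row_conflation:
  assumes ip: "(i, p) \<in> E" "i \<in> Hom X Y" "p \<in> Hom Y Z"
    and ac: "(a, c) \<in> E" "a \<in> Hom A0 B" "c \<in> Hom B C0" "A0 \<in> \<A>"
    and uX: "(uX, vX) \<in> E" "uX \<in> Hom X' X" "vX \<in> Hom X A0"
    and uY: "(uY, f) \<in> E" "uY \<in> Hom Y' Y" "f \<in> Hom Y B"
    and uZ: "(uZ, vZ) \<in> E" "uZ \<in> Hom Z' Z" "vZ \<in> Hom Z C0"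
    and left: "f \<cdot> i = a \<cdot> vX" and right: "vZ \<cdot> p = c \<cdot> f"
  obtains i' p' where "(i', p') \<in> E" "i' \<in> Hom X' Y'" "p' \<in> Hom Y' Z'"
    "i \<cdot> uX = uY \<cdot> i'" "p \<cdot> uY = uZ \<cdot> p'"
proof -
  obtain w q k where pb: "is_pullback C p uZ w q" and kq: "(k, q) \<in> E"
    and k: "k \<in> Hom X (Dom C w)" "w \<cdot> k = i"
    using conflation_pullback[OF ip uZ(2)] .
  define P where "P = Dom C w"
  note wq = pullback_homs[OF pb ip(3) uZ(2), folded P_def] and k = k[folded P_def]
  have q: "q \<in> Hom P Z'" using wq(2) .
  have a_monic: "monic a" using conflation_kernel[OF ac(1)] kernel_monic by blast
  have "c \<cdot> (f \<cdot> w) = vZ \<cdot> (uZ \<cdot> q)"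
    using comp_assoc[OF wq(1) uY(3) ac(3)] right comp_assoc[OF wq(1) ip(3) uZ(3)] wq(3) by simp
  also have "\<dots> = Zer C P C0"
    using comp_assoc[OF q uZ(2,3)] kernel_zero[OF conflation_kernel[OF uZ(1)] uZ(2,3)]
      zero_comp[OF q homD(5)[OF ac(3)]] by simp
  finally obtain g where g: "g \<in> Hom P A0" "a \<cdot> g = f \<cdot> w"
    using kernel_factor[OF conflation_kernel[OF ac(1)] ac(2,3) comp_hom[OF wq(1) uY(3)]] by blast
  have "a \<cdot> (g \<cdot> k) = a \<cdot> vX"
    using comp_assoc[OF k(1) g(1) ac(2)] g(2) comp_assoc[OF k(1) wq(1) uY(3)] k(2) left by simp
  then have gk: "g \<cdot> k = vX" by (rule monicD[OF a_monic ac(2) comp_hom[OF k(1) g(1)] uX(3)])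
  have "vZ \<cdot> (p \<cdot> uY) = c \<cdot> (f \<cdot> uY)"
    using comp_assoc[OF uY(2) ip(3) uZ(3)] right comp_assoc[OF uY(2,3) ac(3)] by simp
  also have "\<dots> = Zer C Y' C0"
    using kernel_zero[OF conflation_kernel[OF uY(1)] uY(2,3)] comp_zero[OF ac(3) homD(4)[OF uY(2)]]
    by simp
  finally obtain y where y: "y \<in> Hom Y' Z'" "uZ \<cdot> y = p \<cdot> uY"
    using kernel_factor[OF conflation_kernel[OF uZ(1)] uZ(2,3) comp_hom[OF uY(2) ip(3)]] by blast
  then obtain j where j: "j \<in> Hom Y' P" "w \<cdot> j = uY"
    using pullback_factor[OF pb ip(3) uZ(2) wq(1) uY(2)] by metis
  have w_monic: "monic w"
    using pullback_of_monic[OF pb ip(3) uZ(2) kernel_monic[OF conflation_kernel[OF uZ(1)]]] .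
  have ker_j: "is_kernel C j g"
    using kernel_through_monic[OF conflation_kernel[OF uY(1)] uY(2,3) wq(1) w_monic j g(1) ac(2) a_monic g(2)] .
  have "g \<cdot> (k \<cdot> uX) = Zer C X' A0"
    using comp_assoc[OF uX(2) k(1) g(1)] gk kernel_zero[OF conflation_kernel[OF uX(1)] uX(2,3)] by simp
  then obtain i' where i': "i' \<in> Hom X' Y'" "j \<cdot> i' = k \<cdot> uX"
    using kernel_factor[OF ker_j j(1) g(1) comp_hom[OF uX(2) k(1)]] by metis
  have "(i', q \<cdot> j) \<in> E"
    using kernel_restriction_conflation[OF kq k(1) q g(1) ac(4) _ uX(2) ker_j j(1) i'] uX(1) gk by simp
  moreover have "i \<cdot> uX = uY \<cdot> i'"
    using comp_assoc[OF i'(1) j(1) wq(1)] j(2) i'(2) comp_assoc[OF uX(2) k(1) wq(1)] k(2) by simp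
  moreover have "p \<cdot> uY = uZ \<cdot> (q \<cdot> j)"
    using comp_assoc[OF j(1) q uZ(2)] wq(3) comp_assoc[OF j(1) wq(1) ip(3)] j(2) by simp
  ultimately show ?thesis using that i'(1) comp_hom[OF j(1) q] by blast
qed

end

theorem mainTheorem7:
  fixes C :: "('o,'m) cat" and E :: "('m \<times> 'm) set" and \<A> :: "'o set"
    and X Y Z B :: 'o and i p f :: 'm
  assumes "deflation_exact C E"
    and "adm_defl_percolating C E \<A>"
    and "(i, p) \<in> E" and "i \<in> hom C X Y" and "p \<in> hom C Y Z"
    and "deflation E f" and "f \<in> hom C Y B" and "B \<in> \<A>"
  shows "\<exists>X2 Y2 Z2 A0 C0 i2 p2 a c uX uY uZ vX vZ.
     \<comment> \<open>top row\<close>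
     i2 \<in> hom C X2 Y2 \<and> p2 \<in> hom C Y2 Z2 \<and> (i2, p2) \<in> E \<and>
     \<comment> \<open>bottom row, lying in \<A>\<close>
     a \<in> hom C A0 B \<and> c \<in> hom C B C0 \<and> (a, c) \<in> E \<and>
     A0 \<in> \<A> \<and> B \<in> \<A> \<and> C0 \<in> \<A> \<and>
     \<comment> \<open>columns\<close>
     uX \<in> hom C X2 X \<and> vX \<in> hom C X A0 \<and> (uX, vX) \<in> E \<and>
     uY \<in> hom C Y2 Y \<and> (uY, f) \<in> E \<and>
     uZ \<in> hom C Z2 Z \<and> vZ \<in> hom C Z C0 \<and> (uZ, vZ) \<in> E \<and>
     \<comment> \<open>upper vertical maps are \<A>^{-1}-inflations\<close>
     A_inv_inflation C E \<A> uX \<and> A_inv_inflation C E \<A> uY \<and> A_inv_inflation C E \<A> uZ \<and>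
     \<comment> \<open>commutativity\<close>
     Comp C i uX = Comp C uY i2 \<and> Comp C p uY = Comp C uZ p2 \<and>
     Comp C f i = Comp C a vX \<and> Comp C vZ p = Comp C c f \<and>
     \<comment> \<open>upper left square is a pullback, lower right square is a pushout\<close>
     is_pullback C i uY uX i2 \<and> is_pushout C p f vZ c"
proof -
  interpret deflation_percolating_cat C E \<A>
    using assms(1,2) by unfold_locales
  note ip = assms(3-5) and f = assms(6-8)
  obtain uY Y2 where uY: "(uY, f) \<in> E" "uY \<in> hom C Y2 Y" using deflation_kernel[OF f(1,2)] .
  obtain A0 C0 vX a c vZ where vX: "vX \<in> hom C X A0" "deflation E vX"
    and ac: "(a, c) \<in> E" "a \<in> hom C A0 B" "c \<in> hom C B C0" and A: "A0 \<in> \<A>" "C0 \<in> \<A>"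
    and vZ: "vZ \<in> hom C Z C0" "deflation E vZ" and left: "f \<cdot> i = a \<cdot> vX" and right: "vZ \<cdot> p = c \<cdot> f"
    using morphism_onto_conflation_in_A[OF ip f] by metis
  obtain uX X2 where uX: "(uX, vX) \<in> E" "uX \<in> hom C X2 X" using deflation_kernel[OF vX(2,1)] .
  obtain uZ Z2 where uZ: "(uZ, vZ) \<in> E" "uZ \<in> hom C Z2 Z" using deflation_kernel[OF vZ(2,1)] .
  obtain i2 p2 where top: "(i2, p2) \<in> E" "i2 \<in> hom C X2 Y2" "p2 \<in> hom C Y2 Z2"
    and upper: "i \<cdot> uX = uY \<cdot> i2" "p \<cdot> uY = uZ \<cdot> p2"
    using kernel_row_conflation[OF ip ac A(1) uX vX(1) uY f(2) uZ vZ(1) left right] .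
  have "is_pullback C i uY uX i2"
    using kernel_square_pullback[OF conflation_kernel[OF uX(1)] uX(2) vX(1) conflation_kernel[OF uY(1)]
        uY(2) f(2) ip(2) ac(2) kernel_monic[OF conflation_kernel[OF ac(1)]] left top(2) upper(1)] .
  moreover have "is_pushout C p f vZ c"
    using cokernel_square_pushout[OF conflation_cokernel[OF ip(1)] ip(2,3) conflation_cokernel[OF ac(1)]
        ac(2,3) f(2) vX(1) deflation_epic[OF vX(2)] left vZ(1) right] .
  moreover have "A_inv_inflation C E \<A> uX" "A_inv_inflation C E \<A> uY" "A_inv_inflation C E \<A> uZ"
    unfolding A_inv_inflation_def
    using uX(1) uY(1) uZ(1) homD(3)[OF vX(1)] homD(3)[OF f(2)] homD(3)[OF vZ(1)] A f(3) by blast+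
  ultimately show ?thesis
    using top ac A f uX(1,2) vX(1) uY uZ(1,2) vZ(1) upper left right by blast
qed

end
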